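(* Let $X$ be a real Banach space, $L\geq0$, and $h:X\times X^*\to\mathbb{R}\cup\{\pm\infty\}$ a proper lower semicontinuous convex function with $h(x,x^* )\geq\langle x,x^*\rangle$ for all $(x,x^* )$, and such that $\|y^*\|\leq L$ for all $y^*\in P_1(D(h^* ))$. Then: 1. for every $x^*\in P_2(D(h))$, the function $h(\cdot,x^* )$ is $L$-Lipschitz continuous (and real-valued) on $X$; 2. $D(h)=X\times P_2(D(h))\subseteq X\times\{x^*\in X^*\;|\;\|x^*\|\leq L\}$; 3. $\|x^*\|\leq L$ for all $x^*\in P_2D(h)$, and $P_1(D(h))=X$.
   Context: $P_1,P_2$ are the canonical projections of a Cartesian product onto its factors; $D(f)=\{z\;|\;f(z)<\infty\}$; $h$ proper means $h\not\equiv+\infty$ and $h>-\infty$. The conjugate of $h$ is $h^*:X^*\times X^{**}\to\mathbb{R}\cup\{\pm\infty\}$, $h^*(x^*,x^{**})=\sup_{(y,y^* )\in X\times X^*}\langle y,x^*\rangle+\langle x^{**},y^*\rangle-h(y,y^* )$. *)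

theory Defs
  imports "HOL-Analysis.Analysis"
begin

(* Dual space X* = bounded linear functionals 'a =>L real (operator norm);
   bidual = ('a =>L real) =>L real. Extended reals = ereal. *)

definition edom :: "('b \<Rightarrow> ereal) \<Rightarrow> 'b set" where
  "edom f = {z. f z < \<infinity>}"

definition proper_fun :: "('b \<Rightarrow> ereal) \<Rightarrow> bool" where
  "proper_fun f \<longleftrightarrow> (\<exists>z. f z \<noteq> \<infinity>) \<and> (\<forall>z. f z > -\<infinity>)"

definition econvex :: "('b::real_vector \<Rightarrow> ereal) \<Rightarrow> bool" where
  "econvex f \<longleftrightarrow> convex {(z, t::real). f z \<le> ereal t}"

definition elsc :: "('b::topological_space \<Rightarrow> ereal) \<Rightarrow> bool" where
  "elsc f \<longleftrightarrow> (\<forall>t. closed {z. f z \<le> t})"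

definition fconj ::
  "('a::real_normed_vector \<times> ('a \<Rightarrow>\<^sub>L real) \<Rightarrow> ereal)
   \<Rightarrow> ('a \<Rightarrow>\<^sub>L real) \<times> (('a \<Rightarrow>\<^sub>L real) \<Rightarrow>\<^sub>L real) \<Rightarrow> ereal" where
  "fconj h = (\<lambda>(xs, xss). SUP p \<in> UNIV.
      ereal (blinfun_apply xs (fst p) + blinfun_apply xss (snd p)) - h p)"

end

theory Submission
  imports Defs
begin

text \<open>Fix \<open>x*\<close> with \<open>h(x0, x*) = c\<close> finite and suppose \<open>h(x, x*) > r = c + L\<parallel>x - x0\<parallel>\<close>.
  Separating \<open>((x, x*), r)\<close> from the closed convex epigraph of \<open>h\<close> (Hahn--Banach, applied to the
  distance function of the epigraph) yields a continuous affine minorant \<open>w \<mapsto> r + \<phi>(w - (x, x*))\<close>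
  of \<open>h\<close>. The slope \<open>\<phi>\<close> lies in the domain of \<open>h*\<close>, so its \<open>X\<close>-part has norm at most \<open>L\<close>;
  evaluated at \<open>(x0, x*)\<close> the minorant then exceeds \<open>c\<close>, a contradiction. This one-sided estimate
  makes \<open>h(\<cdot>, x*)\<close> finite and \<open>L\<close>-Lipschitz, and with \<open>\<langle>x, x*\<rangle> \<le> h(x, x*)\<close> it bounds
  \<open>\<parallel>x*\<parallel>\<close> by \<open>L\<close>.\<close>

definition sublinear :: "('v::real_vector \<Rightarrow> real) \<Rightarrow> bool" where
  "sublinear q \<longleftrightarrow> (\<forall>x y. q (x + y) \<le> q x + q y) \<and> (\<forall>c x. c > 0 \<longrightarrow> q (c *\<^sub>R x) = c * q x)"

lemma sublinearI:
  assumes "\<And>x y. q (x + y) \<le> q x + q y" and "\<And>c x. c > 0 \<Longrightarrow> q (c *\<^sub>R x) = c * q x"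
  shows "sublinear q"
  using assms unfolding sublinear_def by blast

lemma sublinear_add: "sublinear q \<Longrightarrow> q (x + y) \<le> q x + q y"
  unfolding sublinear_def by blast

lemma sublinear_scale: "sublinear q \<Longrightarrow> c > 0 \<Longrightarrow> q (c *\<^sub>R x) = c * q x"
  unfolding sublinear_def by blast

lemma sublinear_zero: "sublinear q \<Longrightarrow> q 0 = 0"
  using sublinear_scale[of q 2 0] by simp

lemma sublinear_scale_nonneg: "sublinear q \<Longrightarrow> c \<ge> 0 \<Longrightarrow> q (c *\<^sub>R x) = c * q x"
  using sublinear_scale sublinear_zero by (cases "c = 0") auto

lemma sublinear_neg_le: "sublinear q \<Longrightarrow> - q (- x) \<le> q x"
  using sublinear_add[of q x "- x"] sublinear_zero[of q] by simp

lemma sublinear_INF_chain: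
  fixes C :: "('v::real_vector \<Rightarrow> real) set"
  assumes "C \<noteq> {}" and sub: "\<And>q. q \<in> C \<Longrightarrow> sublinear q"
    and lower: "\<And>q. q \<in> C \<Longrightarrow> b \<le> q"
    and chain: "\<And>q1 q2. q1 \<in> C \<Longrightarrow> q2 \<in> C \<Longrightarrow> q1 \<le> q2 \<or> q2 \<le> q1"
  shows "sublinear (\<lambda>x. INF q\<in>C. q x)"
proof -
  have bdd: "bdd_below ((\<lambda>q. q x) ` C)" for x
    using lower by (auto intro!: bdd_belowI simp: le_fun_def)
  have low: "(INF q\<in>C. q x) \<le> q x" if "q \<in> C" for q x
    using cINF_lower[OF bdd that] .
  show ?thesis
  proof (rule sublinearI)
    fix x y
    have "(INF q\<in>C. q (x + y)) - q2 y \<le> q1 x" if q12: "q1 \<in> C" "q2 \<in> C" for q1 q2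
    proof -
      obtain q where q: "q \<in> C" "q x \<le> q1 x" "q y \<le> q2 y"
        using chain[OF q12] q12 by (auto simp: le_fun_def)
      have "(INF q\<in>C. q (x + y)) \<le> q x + q y"
        using low[OF q(1)] sublinear_add[OF sub[OF q(1)]] by (rule order_trans)
      then show ?thesis using q by simp
    qed
    then have "(INF q\<in>C. q (x + y)) - q2 y \<le> (INF q\<in>C. q x)" if "q2 \<in> C" for q2
      using that \<open>C \<noteq> {}\<close> by (intro cINF_greatest) auto
    then have "(INF q\<in>C. q (x + y)) - (INF q\<in>C. q x) \<le> q2 y" if "q2 \<in> C" for q2
      using that by force
    then have "(INF q\<in>C. q (x + y)) - (INF q\<in>C. q x) \<le> (INF q\<in>C. q y)"
      using \<open>C \<noteq> {}\<close> by (intro cINF_greatest) auto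
    then show "(INF q\<in>C. q (x + y)) \<le> (INF q\<in>C. q x) + (INF q\<in>C. q y)" by simp
  next
    fix c :: real and x assume c: "c > 0"
    have scale: "q (c *\<^sub>R x) = c * q x" if "q \<in> C" for q
      using sublinear_scale[OF sub[OF that] c] .
    have "c * (INF q\<in>C. q x) \<le> q (c *\<^sub>R x)" if "q \<in> C" for q
      using low[OF that, of x] scale[OF that] c by simp
    then have "c * (INF q\<in>C. q x) \<le> (INF q\<in>C. q (c *\<^sub>R x))"
      using \<open>C \<noteq> {}\<close> by (intro cINF_greatest) auto
    moreover have "(INF q\<in>C. q (c *\<^sub>R x)) / c \<le> (INF q\<in>C. q x)"
      using \<open>C \<noteq> {}\<close> low scale c by (intro cINF_greatest) (auto simp: field_simps)
    ultimately show "(INF q\<in>C. q (c *\<^sub>R x)) = c * (INF q\<in>C. q x)"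
      using c by (simp add: field_simps)
  qed
qed

lemma sublinear_shift:
  fixes q :: "'v::real_vector \<Rightarrow> real" and a :: 'v
  assumes q: "sublinear q"
  defines "q' \<equiv> \<lambda>x. INF t\<in>{0::real..}. q (x + t *\<^sub>R a) - t * q a"
  shows "sublinear q'" and "q' \<le> q" and "q' (- a) \<le> - q a"
proof -
  have "- q (- x) \<le> q (x + t *\<^sub>R a) - t * q a" if "t \<ge> 0" for x t
    using sublinear_add[OF q, of "x + t *\<^sub>R a" "- x"] sublinear_scale_nonneg[OF q that] by simp
  then have bdd: "bdd_below ((\<lambda>t. q (x + t *\<^sub>R a) - t * q a) ` {0..})" for x
    by (auto intro!: bdd_belowI)
  have low: "q' x \<le> q (x + t *\<^sub>R a) - t * q a" if "t \<ge> 0" for x t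
    unfolding q'_def using cINF_lower[OF bdd, of t x] that by simp
  have greatest: "m \<le> q' x" if "\<And>t. t \<ge> 0 \<Longrightarrow> m \<le> q (x + t *\<^sub>R a) - t * q a" for m x
    unfolding q'_def using that by (intro cINF_greatest) auto
  show "q' \<le> q" using low[of 0] by (simp add: le_fun_def)
  show "q' (- a) \<le> - q a" using low[of 1 "- a"] sublinear_zero[OF q] by simp
  show "sublinear q'"
  proof (rule sublinearI)
    fix x y
    have "q' (x + y) \<le> (q (x + t *\<^sub>R a) - t * q a) + (q (y + s *\<^sub>R a) - s * q a)"
      if "t \<ge> 0" "s \<ge> 0" for t s
    proof -
      have "(x + y) + (t + s) *\<^sub>R a = (x + t *\<^sub>R a) + (y + s *\<^sub>R a)"
        by (simp add: algebra_simps)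
      then show ?thesis
        using low[of "t + s" "x + y"] that sublinear_add[OF q, of "x + t *\<^sub>R a" "y + s *\<^sub>R a"]
        by (simp add: algebra_simps)
    qed
    then have "q' (x + y) - (q (y + s *\<^sub>R a) - s * q a) \<le> q' x" if "s \<ge> 0" for s
      using that by (intro greatest) (simp add: algebra_simps)
    then have "q' (x + y) - q' x \<le> q' y"
      by (intro greatest) (simp add: algebra_simps)
    then show "q' (x + y) \<le> q' x + q' y" by simp
  next
    fix c :: real and x assume c: "c > 0"
    have "q' (c *\<^sub>R x) / c \<le> q (x + t *\<^sub>R a) - t * q a" if "t \<ge> 0" for t
    proof -
      have "c *\<^sub>R x + (c * t) *\<^sub>R a = c *\<^sub>R (x + t *\<^sub>R a)" by (simp add: algebra_simps)
      then show ?thesis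
        using low[of "c * t" "c *\<^sub>R x"] that c sublinear_scale[OF q c, of "x + t *\<^sub>R a"]
        by (simp add: field_simps)
    qed
    then have "q' (c *\<^sub>R x) / c \<le> q' x" by (rule greatest)
    moreover have "c * q' x \<le> q (c *\<^sub>R x + t *\<^sub>R a) - t * q a" if "t \<ge> 0" for t
    proof -
      have "c *\<^sub>R (x + (t / c) *\<^sub>R a) = c *\<^sub>R x + t *\<^sub>R a" using c by (simp add: algebra_simps)
      then show ?thesis
        using low[of "t / c" x] that c sublinear_scale[OF q c, of "x + (t / c) *\<^sub>R a"]
        by (simp add: field_simps)
    qed
    then have "c * q' x \<le> q' (c *\<^sub>R x)" by (rule greatest)
    ultimately show "q' (c *\<^sub>R x) = c * q' x" using c by (simp add: field_simps)
  qed
qed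

lemma minimal_sublinear_imp_linear:
  fixes m :: "'v::real_vector \<Rightarrow> real"
  assumes m: "sublinear m" and minimal: "\<And>q. sublinear q \<Longrightarrow> q \<le> m \<Longrightarrow> q = m"
  shows "linear m"
proof -
  have neg: "m (- a) = - m a" for a
  proof -
    \<comment> \<open>by minimality the shift along \<open>a\<close> changes nothing, and it forces \<open>m (- a) \<le> - m a\<close>\<close>
    define q where "q = (\<lambda>x. INF t\<in>{0::real..}. m (x + t *\<^sub>R a) - t * m a)"
    have "q = m"
      using minimal sublinear_shift(1,2)[OF m, of a] unfolding q_def by blast
    moreover have "q (- a) \<le> - m a"
      unfolding q_def using sublinear_shift(3)[OF m, of a] by simp
    ultimately have "m (- a) \<le> - m a" by simp
    then show ?thesis
      using sublinear_neg_le[OF m, of a] by simp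
  qed
  show ?thesis
  proof (rule linearI)
    fix x y
    show "m (x + y) = m x + m y"
      using sublinear_add[OF m, of x y] sublinear_add[OF m, of "- x" "- y"] neg[of x] neg[of y]
        neg[of "x + y"] by simp
  next
    fix r :: real and x
    show "m (r *\<^sub>R x) = r *\<^sub>R m x"
    proof (cases "r \<ge> 0")
      case True then show ?thesis using sublinear_scale_nonneg[OF m True] by simp
    next
      case False
      then have "m (r *\<^sub>R x) = m (- ((- r) *\<^sub>R x))" by simp
      then show ?thesis using neg sublinear_scale_nonneg[OF m, of "- r"] False by simp
    qed
  qed
qed

text \<open>Hahn--Banach: a minimal sublinear functional below \<open>p\<close> exists by Zorn's lemma and is linear.\<close>
theorem sublinear_dominates_linear:
  fixes p :: "'v::real_vector \<Rightarrow> real"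
  assumes p: "sublinear p"
  shows "\<exists>f. linear f \<and> f \<le> p"
proof -
  define A where "A = {q. sublinear q \<and> q \<le> p}"
  define P where "P = (\<lambda>q1 q2 :: 'v \<Rightarrow> real. q2 \<le> q1)"
  have po: "partial_order_on A (relation_of P A)"
    by (rule partial_order_on_relation_ofI) (auto simp: P_def)
  have "\<exists>u\<in>A. \<forall>q\<in>C. P q u" if C: "C \<in> Chains (relation_of P A)" for C
  proof (cases "C = {}")
    case True then show ?thesis using p by (auto simp: A_def)
  next
    case False
    have CA: "C \<subseteq> A" using Chains_relation_of[OF C] .
    have chain: "q1 \<le> q2 \<or> q2 \<le> q1" if "q1 \<in> C" "q2 \<in> C" for q1 q2
      using C that unfolding Chains_def relation_of_def P_def by blast
    have lower: "(\<lambda>x. - p (- x)) \<le> q" if "q \<in> C" for q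
    proof -
      have "sublinear q" "q \<le> p" using that CA by (auto simp: A_def)
      then have "- p (- x) \<le> q x" for x
        using sublinear_neg_le[of q x] by (smt (verit) le_fun_def)
      then show ?thesis by (simp add: le_fun_def)
    qed
    define u where "u = (\<lambda>x. INF q\<in>C. q x)"
    have u: "sublinear u"
      unfolding u_def using False CA lower chain by (intro sublinear_INF_chain) (auto simp: A_def)
    have "bdd_below ((\<lambda>q. q x) ` C)" for x
      using lower by (auto intro!: bdd_belowI simp: le_fun_def)
    then have below: "u \<le> q" if "q \<in> C" for q
      unfolding u_def le_fun_def using that by (auto intro: cINF_lower)
    obtain q0 where "q0 \<in> C" using False by blast
    then have "u \<le> p" using below CA by (auto simp: A_def intro: order_trans)
    then have "u \<in> A" using u by (simp add: A_def)
    then show ?thesis using below unfolding P_def by blast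
  qed
  then obtain m where m: "m \<in> A" and maximal: "\<And>q. q \<in> A \<Longrightarrow> q \<le> m \<Longrightarrow> q = m"
    using predicate_Zorn[OF po] unfolding P_def by blast
  have "linear m"
    using m maximal by (intro minimal_sublinear_imp_linear) (auto simp: A_def intro: order_trans)
  then show ?thesis using m by (auto simp: A_def)
qed

lemma convex_on_infdist:
  fixes E :: "'v::real_normed_vector set"
  assumes "convex E" "E \<noteq> {}"
  shows "convex_on UNIV (\<lambda>x. infdist x E)"
proof (rule convex_onI)
  fix t :: real and x y :: 'v assume t: "t > 0" "t < 1"
  show "infdist ((1 - t) *\<^sub>R x + t *\<^sub>R y) E \<le> (1 - t) * infdist x E + t * infdist y E"
  proof (rule field_le_epsilon)
    fix e :: real assume "e > 0"
    have "\<exists>a\<in>E. dist z a < infdist z E + e" for z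
    proof -
      have bdd: "bdd_below ((\<lambda>a. dist z a) ` E)" by (auto intro!: bdd_belowI[of _ 0])
      have "(INF a\<in>E. dist z a) < infdist z E + e"
        using \<open>e > 0\<close> infdist_notempty[OF \<open>E \<noteq> {}\<close>] by simp
      then show ?thesis using cINF_less_iff[OF \<open>E \<noteq> {}\<close> bdd] by auto
    qed
    then obtain a b where a: "a \<in> E" "dist x a < infdist x E + e"
      and b: "b \<in> E" "dist y b < infdist y E + e" by meson
    have "(1 - t) *\<^sub>R a + t *\<^sub>R b \<in> E" using \<open>convex E\<close> a b t by (simp add: convex_def)
    then have "infdist ((1 - t) *\<^sub>R x + t *\<^sub>R y) E
        \<le> norm ((1 - t) *\<^sub>R (x - a) + t *\<^sub>R (y - b))"
      by (rule infdist_le[THEN order_trans]) (simp add: dist_norm algebra_simps)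
    also have "\<dots> \<le> (1 - t) * dist x a + t * dist y b"
      using norm_triangle_ineq[of "(1 - t) *\<^sub>R (x - a)" "t *\<^sub>R (y - b)"] t by (simp add: dist_norm)
    also have "\<dots> \<le> (1 - t) * (infdist x E + e) + t * (infdist y E + e)"
      using a(2) b(2) t by (intro add_mono mult_left_mono) auto
    finally show "infdist ((1 - t) *\<^sub>R x + t *\<^sub>R y) E \<le> (1 - t) * infdist x E + t * infdist y E + e"
      by (simp add: algebra_simps)
  qed
qed simp

lemma lipschitz_on_infdist: "1-lipschitz_on UNIV (\<lambda>x. infdist x E)"
  by (rule lipschitz_onI) (auto simp: dist_real_def infdist_triangle_abs)

lemma convex_difference_quotient_add:
  fixes g :: "'v::real_vector \<Rightarrow> real"
  assumes convex: "convex_on UNIV g" and t: "t > 0" and s: "s > 0"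
  defines "r \<equiv> t * s / (t + s)"
  shows "(g (a + r *\<^sub>R (y + z)) - g a) / r \<le> (g (a + t *\<^sub>R y) - g a) / t + (g (a + s *\<^sub>R z) - g a) / s"
proof -
  define u where "u = t / (t + s)"
  have r: "r > 0" and u: "0 \<le> u" "u \<le> 1" using t s by (auto simp: r_def u_def)
  have "(1 - u) * t = r" "u * s = r" using t s by (auto simp: r_def u_def field_simps)
  then have "a + r *\<^sub>R (y + z) = a + ((1 - u) * t) *\<^sub>R y + (u * s) *\<^sub>R z"
    by (simp add: scaleR_right_distrib add.assoc)
  also have "\<dots> = (1 - u) *\<^sub>R (a + t *\<^sub>R y) + u *\<^sub>R (a + s *\<^sub>R z)"
    by (simp add: algebra_simps)
  finally have eq: "a + r *\<^sub>R (y + z) = (1 - u) *\<^sub>R (a + t *\<^sub>R y) + u *\<^sub>R (a + s *\<^sub>R z)" .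
  have "g ((1 - u) *\<^sub>R (a + t *\<^sub>R y) + u *\<^sub>R (a + s *\<^sub>R z))
      \<le> (1 - u) * g (a + t *\<^sub>R y) + u * g (a + s *\<^sub>R z)"
    using convex_onD[OF convex u] by simp
  then have "g (a + r *\<^sub>R (y + z)) - g a
      \<le> (1 - u) * (g (a + t *\<^sub>R y) - g a) + u * (g (a + s *\<^sub>R z) - g a)"
    unfolding eq by (simp add: algebra_simps)
  then have "(g (a + r *\<^sub>R (y + z)) - g a) / r
      \<le> ((1 - u) * (g (a + t *\<^sub>R y) - g a) + u * (g (a + s *\<^sub>R z) - g a)) / r"
    using r by (simp add: divide_right_mono)
  also have "((1 - u) * A + u * B) / r = A / t + B / s" for A B
  proof -
    have ts: "t + s \<noteq> 0" using t s by simp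
    then have "1 - u = s / (t + s)" by (simp add: u_def field_simps)
    then have "((1 - u) * A + u * B) / r = (s * A + t * B) / (t + s) / r"
      by (simp add: u_def add_divide_distrib)
    also have "\<dots> = (s * A + t * B) / (t * s)" using ts by (simp add: r_def)
    also have "\<dots> = A / t + B / s" using t s by (simp add: add_divide_distrib)
    finally show ?thesis .
  qed
  finally show ?thesis .
qed

lemma sublinear_directional_derivative:
  fixes g :: "'v::real_normed_vector \<Rightarrow> real" and a :: 'v
  assumes convex: "convex_on UNIV g" and lipschitz: "K-lipschitz_on UNIV g"
  defines "D \<equiv> \<lambda>y t. (g (a + t *\<^sub>R y) - g a) / t"
  shows "sublinear (\<lambda>y. INF t\<in>{0<..}. D y t)" and "(INF t\<in>{0<..}. D y t) \<le> g (a + y) - g a"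
proof -
  define p where "p y = (INF t\<in>{0::real<..}. D y t)" for y
  have "- K * norm y \<le> D y t" if "t > 0" for y t
  proof -
    have "\<bar>g (a + t *\<^sub>R y) - g a\<bar> \<le> K * (t * norm y)"
      using lipschitz_onD[OF lipschitz, of "a + t *\<^sub>R y" a] that by (simp add: dist_real_def dist_norm)
    then show ?thesis using that unfolding D_def by (simp add: field_simps abs_le_iff)
  qed
  then have bdd: "bdd_below ((D y) ` {0<..})" for y by (auto intro!: bdd_belowI)
  have low: "p y \<le> D y t" if "t > 0" for y t
    unfolding p_def using cINF_lower[OF bdd, of t y] that by simp
  have greatest: "m \<le> p y" if "\<And>t. t > 0 \<Longrightarrow> m \<le> D y t" for m y
    unfolding p_def using that by (intro cINF_greatest) auto
  have "sublinear p"
  proof (rule sublinearI)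
    fix y z
    have "p (y + z) \<le> D y t + D z s" if "t > 0" "s > 0" for t s
      using low[of "t * s / (t + s)" "y + z"] convex_difference_quotient_add[OF convex that, of a y z] that
      unfolding D_def by simp
    then have "p (y + z) - D z s \<le> p y" if "s > 0" for s
      using that by (intro greatest) (simp add: algebra_simps)
    then have "p (y + z) - p y \<le> p z"
      by (intro greatest) (simp add: algebra_simps)
    then show "p (y + z) \<le> p y + p z" by simp
  next
    fix c :: real and y assume c: "c > 0"
    have Dc: "D (c *\<^sub>R y) t = c * D y (c * t)" if "t > 0" for t
      unfolding D_def using c that by (simp add: field_simps)
    have "p (c *\<^sub>R y) / c \<le> D y s" if "s > 0" for s
      using low[of "s / c" "c *\<^sub>R y"] Dc[of "s / c"] c that by (simp add: field_simps)
    then have "p (c *\<^sub>R y) / c \<le> p y" by (rule greatest)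
    moreover have "c * p y \<le> p (c *\<^sub>R y)"
    proof (rule greatest)
      fix t :: real assume "t > 0"
      then show "c * p y \<le> D (c *\<^sub>R y) t" using Dc low[of "c * t" y] c by simp
    qed
    ultimately show "p (c *\<^sub>R y) = c * p y" using c by (simp add: field_simps)
  qed
  then show "sublinear (\<lambda>y. INF t\<in>{0<..}. D y t)" by (simp add: p_def[abs_def])
  show "(INF t\<in>{0<..}. D y t) \<le> g (a + y) - g a"
    using low[of 1 y] by (simp add: p_def D_def)
qed

text \<open>Hahn--Banach applied to the directional derivative of the distance to \<open>E\<close> at \<open>a\<close>.\<close>
theorem convex_separation_infdist:
  fixes E :: "'v::real_normed_vector set"
  assumes "convex E" "E \<noteq> {}"
  shows "\<exists>f. bounded_linear f \<and> (\<forall>y. \<bar>f y\<bar> \<le> norm y) \<and> (\<forall>e\<in>E. f e \<le> f a - infdist a E)"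
proof -
  define p where "p y = (INF t\<in>{0<..}. (infdist (a + t *\<^sub>R y) E - infdist a E) / t)" for y
  note derivative = sublinear_directional_derivative[OF convex_on_infdist[OF assms] lipschitz_on_infdist]
  have "sublinear p" using derivative(1) by (simp add: p_def[abs_def])
  then obtain f where f: "linear f" "f \<le> p" using sublinear_dominates_linear by blast
  have up: "f y \<le> infdist (a + y) E - infdist a E" for y
    using f(2) derivative(2)[of a y] unfolding p_def le_fun_def by (blast intro: order_trans)
  have "f y \<le> norm y" for y
    using up[of y] infdist_triangle_abs[of "a + y" E a] by (simp add: dist_norm abs_le_iff)
  then have bound: "\<bar>f y\<bar> \<le> norm y" for y
    using linear_neg[OF f(1), of y] by (smt (verit) norm_minus_cancel)
  have "bounded_linear f"
    using f(1) bound by (intro bounded_linear_intro[where K=1]) (auto simp: linear_add linear_scale)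
  moreover have "f e \<le> f a - infdist a E" if "e \<in> E" for e
    using up[of "e - a"] linear_diff[OF f(1), of e a] that by simp
  ultimately show ?thesis using bound by blast
qed

definition ereal_epigraph :: "('b \<Rightarrow> ereal) \<Rightarrow> ('b \<times> real) set" where
  "ereal_epigraph f = {(z, t). f z \<le> ereal t}"

lemma mem_ereal_epigraph [simp]: "(z, t) \<in> ereal_epigraph f \<longleftrightarrow> f z \<le> ereal t"
  by (simp add: ereal_epigraph_def)

lemma closed_ereal_epigraph:
  fixes f :: "'b::metric_space \<Rightarrow> ereal"
  assumes "elsc f"
  shows "closed (ereal_epigraph f)"
  unfolding closed_def open_dist
proof (intro ballI)
  fix p assume "p \<in> - ereal_epigraph f"
  then obtain z r where p: "p = (z, r)" and "ereal r < f z" by (cases p) auto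
  then obtain r' where r': "ereal r < ereal r'" "ereal r' < f z" using ereal_dense2 by blast
  have "open (- {w. f w \<le> ereal r'})" using \<open>elsc f\<close> by (simp add: elsc_def open_Compl)
  moreover have "z \<in> - {w. f w \<le> ereal r'}" using r' by auto
  ultimately obtain \<epsilon> where "\<epsilon> > 0" and \<epsilon>: "\<And>w. dist w z < \<epsilon> \<Longrightarrow> ereal r' < f w"
    unfolding open_dist by (force simp: dist_commute)
  have "(w, t) \<in> - ereal_epigraph f" if "dist (w, t) (z, r) < min \<epsilon> (r' - r)" for w t
  proof -
    have "dist w z < \<epsilon>" "dist t r < r' - r"
      using that dist_fst_le[of "(w, t)" "(z, r)"] dist_snd_le[of "(w, t)" "(z, r)"] by auto
    then have "ereal t < ereal r'" "ereal r' < f w" using \<epsilon> by (auto simp: dist_real_def)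
    then have "ereal t < f w" by (rule less_trans)
    then show ?thesis by simp
  qed
  moreover have "min \<epsilon> (r' - r) > 0" using \<open>\<epsilon> > 0\<close> r' by simp
  ultimately show "\<exists>e>0. \<forall>q. dist q p < e \<longrightarrow> q \<in> - ereal_epigraph f"
    unfolding p by (metis surj_pair)
qed

lemma linear_real_Pair:
  fixes W :: "'b::real_vector \<times> real \<Rightarrow> real"
  assumes "linear W"
  shows "W (w, t) = W (w, 0) + t * W (0, 1)"
proof -
  have "W (w, t) = W ((w, 0) + t *\<^sub>R (0, 1))" by simp
  also have "\<dots> = W (w, 0) + t * W (0, 1)"
    by (simp only: linear_add[OF assms] linear_scale[OF assms] real_scaleR_def)
  finally show ?thesis .
qed

lemma vertical_component_nonpos_if_bdd_above_epigraph:
  fixes f :: "'b::real_vector \<Rightarrow> ereal" and W :: "'b \<times> real \<Rightarrow> real"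
  assumes "linear W" and "f z < \<infinity>" and bdd: "\<forall>e \<in> ereal_epigraph f. W e \<le> C"
  shows "W (0, 1) \<le> 0"
proof (rule ccontr)
  assume "\<not> W (0, 1) \<le> 0"
  then have \<beta>: "W (0, 1) > 0" by simp
  define t where "t = max (real_of_ereal (f z)) ((C - W (z, 0)) / W (0, 1) + 1)"
  have "f z \<le> ereal t" using \<open>f z < \<infinity>\<close> unfolding t_def by (cases "f z") auto
  then have "W (z, t) \<le> C" using bdd by simp
  moreover have "((C - W (z, 0)) / W (0, 1) + 1) * W (0, 1) \<le> t * W (0, 1)"
    using \<beta> unfolding t_def by (intro mult_right_mono) auto
  moreover have "((C - W (z, 0)) / W (0, 1) + 1) * W (0, 1) = C - W (z, 0) + W (0, 1)"
    using \<beta> by (simp add: field_simps)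
  ultimately show False using linear_real_Pair[OF \<open>linear W\<close>, of z t] \<beta> by linarith
qed

lemma epigraph_separation:
  fixes f :: "'b::real_normed_vector \<Rightarrow> ereal"
  assumes "proper_fun f" "elsc f" "econvex f" and "ereal r < f z"
  shows "\<exists>W \<delta>. bounded_linear W \<and> (\<delta>::real) > 0 \<and> W (0, 1) \<le> 0
    \<and> (\<forall>e \<in> ereal_epigraph f. W e + \<delta> \<le> W (z, r))"
proof -
  obtain z0 where "f z0 \<noteq> \<infinity>" and "f z0 > -\<infinity>"
    using \<open>proper_fun f\<close> unfolding proper_fun_def by blast
  then have "(z0, real_of_ereal (f z0)) \<in> ereal_epigraph f" by (cases "f z0") auto
  then have nonempty: "ereal_epigraph f \<noteq> {}" by blast
  have \<delta>: "0 < infdist (z, r) (ereal_epigraph f)"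
    using closed_ereal_epigraph[OF \<open>elsc f\<close>] nonempty \<open>ereal r < f z\<close>
    by (intro infdist_pos_not_in_closed) auto
  obtain W where W: "bounded_linear W"
    "\<forall>e \<in> ereal_epigraph f. W e \<le> W (z, r) - infdist (z, r) (ereal_epigraph f)"
    using convex_separation_infdist[OF \<open>econvex f\<close>[unfolded econvex_def] nonempty[unfolded ereal_epigraph_def]]
    unfolding ereal_epigraph_def by blast
  have "\<forall>e \<in> ereal_epigraph f. W e + infdist (z, r) (ereal_epigraph f) \<le> W (z, r)"
    using W(2) by (simp add: le_diff_eq)
  moreover have "W (0, 1) \<le> 0"
  proof (rule vertical_component_nonpos_if_bdd_above_epigraph)
    show "linear W" using W(1) by (rule bounded_linear.linear)
    show "f z0 < \<infinity>" using \<open>f z0 \<noteq> \<infinity>\<close> by (simp add: less_top)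
    show "\<forall>e \<in> ereal_epigraph f. W e \<le> W (z, r)"
    proof
      fix e assume "e \<in> ereal_epigraph f"
      then have "W e \<le> W (z, r) - infdist (z, r) (ereal_epigraph f)" using W(2) by blast
      then show "W e \<le> W (z, r)" using \<delta> by linarith
    qed
  qed
  ultimately show ?thesis using W(1) \<delta> by blast
qed

lemma nonvertical_combination:
  fixes V W :: "'b::real_normed_vector \<times> real \<Rightarrow> real"
  assumes V: "bounded_linear V" "V (0, 1) < 0" "\<forall>e \<in> E. V e \<le> C"
    and W: "bounded_linear W" "W (0, 1) \<le> 0" "\<delta> > 0" "\<forall>e \<in> E. W e + \<delta> \<le> W p"
  shows "\<exists>G :: 'b \<times> real \<Rightarrow> real. bounded_linear G \<and> G (0, 1) < 0 \<and> (\<forall>e \<in> E. G e < G p)"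
proof -
  define \<kappa> where "\<kappa> = max 0 ((C - V p) / \<delta> + 1)"
  have "\<kappa> \<ge> 0" by (simp add: \<kappa>_def)
  have "C - V p + \<delta> \<le> \<kappa> * \<delta>"
  proof -
    have "((C - V p) / \<delta> + 1) * \<delta> \<le> \<kappa> * \<delta>"
      unfolding \<kappa>_def using W(3) by (intro mult_right_mono) auto
    moreover have "((C - V p) / \<delta> + 1) * \<delta> = C - V p + \<delta>"
      using W(3) by (simp add: field_simps)
    ultimately show ?thesis by simp
  qed
  define G where "G e = V e + \<kappa> * W e" for e
  have "bounded_linear G"
    unfolding G_def using V(1) W(1)
    by (intro bounded_linear_add bounded_linear_compose[OF bounded_linear_mult_right])
  moreover have "G (0, 1) < 0"
    unfolding G_def using V(2) W(2) \<open>\<kappa> \<ge> 0\<close> by (smt (verit) mult_nonneg_nonpos)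
  moreover have "G e < G p" if "e \<in> E" for e
  proof -
    have "\<kappa> * (W e + \<delta>) \<le> \<kappa> * W p"
      using W(4) that \<open>\<kappa> \<ge> 0\<close> by (simp add: mult_left_mono)
    then have "\<kappa> * W e + \<kappa> * \<delta> \<le> \<kappa> * W p" by (simp add: distrib_left)
    moreover have "V e \<le> C" using V(3) that by blast
    ultimately show ?thesis
      using W(3) \<open>C - V p + \<delta> \<le> \<kappa> * \<delta>\<close> unfolding G_def by linarith
  qed
  ultimately show ?thesis by blast
qed

lemma nonvertical_epigraph_separation:
  fixes f :: "'b::real_normed_vector \<Rightarrow> ereal"
  assumes f: "proper_fun f" "elsc f" "econvex f" and "ereal r < f z"
  shows "\<exists>G :: 'b \<times> real \<Rightarrow> real. bounded_linear G \<and> G (0, 1) < 0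
    \<and> (\<forall>e \<in> ereal_epigraph f. G e < G (z, r))"
proof -
  obtain W :: "'b \<times> real \<Rightarrow> real" and \<delta> where W: "bounded_linear W" "\<delta> > 0" "W (0, 1) \<le> 0"
    "\<forall>e \<in> ereal_epigraph f. W e + \<delta> \<le> W (z, r)"
    using epigraph_separation[OF f \<open>ereal r < f z\<close>] by blast
  obtain z0 where "f z0 \<noteq> \<infinity>" and "f z0 > -\<infinity>"
    using \<open>proper_fun f\<close> unfolding proper_fun_def by blast
  then obtain c0 where c0: "f z0 = ereal c0" by (cases "f z0") auto
  \<comment> \<open>\<open>W\<close> may be vertical; separating \<open>(z0, c0 - 1)\<close> from the epigraph, which contains \<open>(z0, c0)\<close>,
    yields a nonvertical \<open>V\<close>\<close>
  have "ereal (c0 - 1) < f z0" using c0 by simp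
  then obtain V :: "'b \<times> real \<Rightarrow> real" and \<delta>' where V: "bounded_linear V" "\<delta>' > 0"
    "\<forall>e \<in> ereal_epigraph f. V e + \<delta>' \<le> V (z0, c0 - 1)"
    using epigraph_separation[OF f] by blast
  have "V (z0, c0) + \<delta>' \<le> V (z0, c0 - 1)" using V(3) c0 by simp
  then have "V (0, 1) < 0"
    using linear_real_Pair[OF bounded_linear.linear[OF V(1)], of z0 c0]
      linear_real_Pair[OF bounded_linear.linear[OF V(1)], of z0 "c0 - 1"] V(2)
    by (simp add: algebra_simps)
  moreover have "\<forall>e \<in> ereal_epigraph f. V e \<le> V (z0, c0 - 1)"
  proof
    fix e assume "e \<in> ereal_epigraph f"
    then have "V e + \<delta>' \<le> V (z0, c0 - 1)" using V(3) by blast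
    then show "V e \<le> V (z0, c0 - 1)" using V(2) by linarith
  qed
  ultimately show ?thesis using nonvertical_combination[OF V(1) _ _ W(1,3,2,4)] by blast
qed

theorem exists_affine_minorant_through:
  fixes f :: "'b::real_normed_vector \<Rightarrow> ereal"
  assumes f: "proper_fun f" "elsc f" "econvex f" and "ereal r < f z"
  shows "\<exists>\<phi>. bounded_linear \<phi> \<and> (\<forall>w. ereal (r + \<phi> (w - z)) < f w)"
proof -
  obtain G :: "'b \<times> real \<Rightarrow> real" where G: "bounded_linear G" "G (0, 1) < 0" "\<forall>e \<in> ereal_epigraph f. G e < G (z, r)"
    using nonvertical_epigraph_separation[OF f \<open>ereal r < f z\<close>] by blast
  define \<mu> where "\<mu> = - G (0, 1)"
  define \<phi> where "\<phi> w = G (w, 0) / \<mu>" for w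
  have \<mu>: "\<mu> > 0" using G(2) by (simp add: \<mu>_def)
  have lin: "linear G" using G(1) by (rule bounded_linear.linear)
  have "bounded_linear \<phi>"
    unfolding \<phi>_def using G(1)
    by (intro bounded_linear_compose[OF bounded_linear_divide] bounded_linear_compose[OF G(1)]
        bounded_linear_Pair bounded_linear_ident bounded_linear_zero)
  moreover have "ereal (r + \<phi> (w - z)) < f w" for w
  proof (cases "f w")
    case (real t)
    then have "G (w, t) < G (z, r)" using G(3) by simp
    then have "G (w, 0) - G (z, 0) < \<mu> * (t - r)"
      using linear_real_Pair[OF lin, of w t] linear_real_Pair[OF lin, of z r]
      by (simp add: \<mu>_def algebra_simps)
    moreover have "G (w - z, 0) = G (w, 0) - G (z, 0)"
      using linear_diff[OF lin, of "(w, 0)" "(z, 0)"] by simp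
    ultimately show ?thesis using \<mu> real by (simp add: \<phi>_def field_simps)
  next
    case MInf then show ?thesis using \<open>proper_fun f\<close> by (simp add: proper_fun_def)
  qed simp
  ultimately show ?thesis by blast
qed

lemma fconj_le_if_affine_minorant:
  fixes h :: "'a::real_normed_vector \<times> ('a \<Rightarrow>\<^sub>L real) \<Rightarrow> ereal"
    and \<phi> :: "'a \<times> ('a \<Rightarrow>\<^sub>L real) \<Rightarrow> real"
  assumes \<phi>: "bounded_linear \<phi>" and minorant: "\<And>w. ereal (\<phi> w + c) \<le> h w"
  shows "fconj h (Blinfun (\<lambda>x. \<phi> (x, 0)), Blinfun (\<lambda>xs. \<phi> (0, xs))) \<le> ereal (- c)"
proof -
  have "bounded_linear (\<lambda>x. \<phi> (x, 0))" "bounded_linear (\<lambda>xs. \<phi> (0, xs))"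
    by (intro bounded_linear_compose[OF \<phi>] bounded_linear_Pair bounded_linear_ident bounded_linear_zero)+
  then have apply_eq: "blinfun_apply (Blinfun (\<lambda>x. \<phi> (x, 0))) x + blinfun_apply (Blinfun (\<lambda>xs. \<phi> (0, xs))) xs
      = \<phi> (x, xs)" for x xs
    using linear_add[OF bounded_linear.linear[OF \<phi>], of "(x, 0)" "(0, xs)"]
    by (simp add: bounded_linear_Blinfun_apply)
  have "ereal (\<phi> p) - h p \<le> ereal (- c)" for p
    using minorant[of p] by (cases "h p") auto
  then show ?thesis
    unfolding fconj_def by (auto simp: apply_eq intro!: SUP_least)
qed

lemma norm_blinfun_le_if_affine_bound:
  fixes \<phi> :: "'a::real_normed_vector \<Rightarrow>\<^sub>L real"
  assumes "L \<ge> 0" and bound: "\<And>x. \<phi> x \<le> K + L * norm x"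
  shows "norm \<phi> \<le> L"
proof (rule norm_blinfun_bound[OF \<open>L \<ge> 0\<close>])
  have linear_bound: "\<phi> x \<le> L * norm x" for x
  proof (rule ccontr)
    assume "\<not> \<phi> x \<le> L * norm x"
    then have gap: "\<phi> x - L * norm x > 0" by simp
    define t where "t = (\<bar>K\<bar> + 1) / (\<phi> x - L * norm x)"
    have "t > 0" unfolding t_def using gap by simp
    have "t * (\<phi> x - L * norm x) \<le> K"
      using bound[of "t *\<^sub>R x"] \<open>t > 0\<close> by (simp add: blinfun.scaleR_right algebra_simps)
    moreover have "t * (\<phi> x - L * norm x) = \<bar>K\<bar> + 1" unfolding t_def using gap by simp
    ultimately show False by simp
  qed
  show "norm (\<phi> x) \<le> L * norm x" for x
    using linear_bound[of x] linear_bound[of "- x"] by (simp add: blinfun.minus_right abs_le_iff)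
qed

lemma lipschitz_onI_one_sided:
  fixes f :: "'a::metric_space \<Rightarrow> real"
  assumes "L \<ge> 0" and "\<And>x y. x \<in> S \<Longrightarrow> y \<in> S \<Longrightarrow> f x \<le> f y + L * dist x y"
  shows "L-lipschitz_on S f"
proof (rule lipschitz_onI[OF _ \<open>L \<ge> 0\<close>])
  fix x y assume "x \<in> S" "y \<in> S"
  then have "f x \<le> f y + L * dist x y" "f y \<le> f x + L * dist x y"
    using assms(2)[of x y] assms(2)[of y x] by (simp_all add: dist_commute)
  then show "dist (f x) (f y) \<le> L * dist x y" by (simp add: dist_real_def abs_le_iff)
qed

lemma lipschitz_estimate_if_conjugate_domain_bounded:
  fixes h :: "'a::real_normed_vector \<times> ('a \<Rightarrow>\<^sub>L real) \<Rightarrow> ereal"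
  assumes h: "proper_fun h" "elsc h" "econvex h"
    and slopes: "\<And>ys. ys \<in> fst ` edom (fconj h) \<Longrightarrow> norm ys \<le> L"
    and "h (x0, xs) = ereal c"
  shows "h (x, xs) \<le> ereal (c + L * norm (x - x0))"
proof (rule ccontr)
  define r where "r = c + L * norm (x - x0)"
  assume "\<not> h (x, xs) \<le> ereal (c + L * norm (x - x0))"
  then have "ereal r < h (x, xs)" unfolding r_def by simp
  then obtain \<phi> where \<phi>: "bounded_linear \<phi>" and minorant: "\<And>w. ereal (r + \<phi> (w - (x, xs))) < h w"
    using exists_affine_minorant_through[OF h] by blast
  define us where "us = Blinfun (\<lambda>x. \<phi> (x, 0))"
  have lin: "linear \<phi>" using \<phi> by (rule bounded_linear.linear)
  have us: "blinfun_apply us v = \<phi> (v, 0)" for v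
    unfolding us_def using bounded_linear_compose[OF \<phi> bounded_linear_Pair[OF bounded_linear_ident bounded_linear_zero]]
    by (simp add: bounded_linear_Blinfun_apply)
  have "ereal (\<phi> w + (r - \<phi> (x, xs))) \<le> h w" for w
    using minorant[of w] linear_diff[OF lin, of w "(x, xs)"] by (simp add: algebra_simps)
  then have "fconj h (us, Blinfun (\<lambda>xs. \<phi> (0, xs))) < \<infinity>"
    unfolding us_def by (rule fconj_le_if_affine_minorant[OF \<phi>, THEN le_less_trans]) simp
  then have "us \<in> fst ` edom (fconj h)"
    unfolding edom_def by (intro image_eqI[where x="(us, Blinfun (\<lambda>xs. \<phi> (0, xs)))"]) auto
  then have "norm us \<le> L" by (rule slopes)
  have "us (x - x0) \<le> norm us * norm (x - x0)"
    using abs_le_D1[OF norm_blinfun[of us "x - x0", unfolded real_norm_def]] .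
  also have "\<dots> \<le> L * norm (x - x0)" using \<open>norm us \<le> L\<close> by (rule mult_right_mono) simp
  finally have "us (x - x0) \<le> L * norm (x - x0)" .
  moreover have "r + \<phi> ((x0, xs) - (x, xs)) < c" using minorant[of "(x0, xs)"] \<open>h (x0, xs) = ereal c\<close> by simp
  then have "r - c < us (x - x0)"
    using linear_neg[OF lin, of "(x - x0, 0)"] by (simp add: us)
  ultimately show False unfolding r_def by simp
qed

lemma fibre_real_valued_lipschitz:
  fixes h :: "'a::real_normed_vector \<times> ('a \<Rightarrow>\<^sub>L real) \<Rightarrow> ereal"
  assumes "L \<ge> 0" and h: "proper_fun h" "elsc h" "econvex h"
    and slopes: "\<And>ys. ys \<in> fst ` edom (fconj h) \<Longrightarrow> norm ys \<le> L"
    and "xs \<in> snd ` edom h"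
  shows fibre_real_valued: "\<exists>c. h (x, xs) = ereal c"
    and fibre_lipschitz: "L-lipschitz_on UNIV (\<lambda>x. real_of_ereal (h (x, xs)))"
proof -
  have estimate: "h (x, xs) \<le> ereal (c + L * norm (x - x0))" if "h (x0, xs) = ereal c" for x0 xs c x
    using h slopes that by (rule lipschitz_estimate_if_conjugate_domain_bounded)
  have real: "\<exists>c. h w = ereal c" if "h w < \<infinity>" for w
  proof -
    have "h w > -\<infinity>" using \<open>proper_fun h\<close> unfolding proper_fun_def by blast
    then show ?thesis using that by (cases "h w") auto
  qed
  obtain x0 where "h (x0, xs) < \<infinity>" using \<open>xs \<in> snd ` edom h\<close> by (auto simp: edom_def)
  then obtain c0 where "h (x0, xs) = ereal c0" using real by blast
  have "h (x, xs) < \<infinity>" for x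
    using estimate[OF \<open>h (x0, xs) = ereal c0\<close>, of x] by (rule le_less_trans) simp
  then show fibre_real_valued: "\<exists>c. h (x, xs) = ereal c" for x using real by blast
  show "L-lipschitz_on UNIV (\<lambda>x. real_of_ereal (h (x, xs)))"
  proof (rule lipschitz_onI_one_sided[OF \<open>L \<ge> 0\<close>])
    fix x y :: 'a
    obtain cx cy where "h (x, xs) = ereal cx" "h (y, xs) = ereal cy"
      using fibre_real_valued by blast
    then show "real_of_ereal (h (x, xs)) \<le> real_of_ereal (h (y, xs)) + L * dist x y"
      using estimate[of y xs cy x] by (simp add: dist_norm)
  qed
qed

lemma fibre_norm_le:
  fixes h :: "'a::real_normed_vector \<times> ('a \<Rightarrow>\<^sub>L real) \<Rightarrow> ereal"
  assumes "L \<ge> 0" and h: "proper_fun h" "elsc h" "econvex h"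
    and pairing: "\<And>x xs. h (x, xs) \<ge> ereal (blinfun_apply xs x)"
    and slopes: "\<And>ys. ys \<in> fst ` edom (fconj h) \<Longrightarrow> norm ys \<le> L"
    and "xs \<in> snd ` edom h"
  shows "norm xs \<le> L"
proof -
  have "\<exists>c. h (0, xs) = ereal c"
    using \<open>L \<ge> 0\<close> h slopes \<open>xs \<in> snd ` edom h\<close> by (rule fibre_real_valued)
  then obtain c where c: "h (0, xs) = ereal c" by blast
  have "ereal (xs x) \<le> ereal (c + L * norm (x - 0))" for x
    using pairing lipschitz_estimate_if_conjugate_domain_bounded[OF h, of L, OF slopes c]
    by (rule order_trans)
  then show ?thesis by (intro norm_blinfun_le_if_affine_bound[OF \<open>L \<ge> 0\<close>]) simp
qed

theorem corollary3p7:
  fixes h :: "'a::banach \<times> ('a \<Rightarrow>\<^sub>L real) \<Rightarrow> ereal"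
    and L :: real
  assumes "L \<ge> 0"
    and "proper_fun h" and "elsc h" and "econvex h"
    and "\<And>x xs. h (x, xs) \<ge> ereal (blinfun_apply xs x)"
    and "\<And>ys. ys \<in> fst ` edom (fconj h) \<Longrightarrow> norm ys \<le> L"
  shows "(\<forall>xs \<in> snd ` edom h. (\<forall>x. \<bar>h (x, xs)\<bar> \<noteq> \<infinity>)
            \<and> L-lipschitz_on UNIV (\<lambda>x. real_of_ereal (h (x, xs))))
       \<and> edom h = UNIV \<times> snd ` edom h
       \<and> edom h \<subseteq> UNIV \<times> {xs. norm xs \<le> L}
       \<and> (\<forall>xs \<in> snd ` edom h. norm xs \<le> L)
       \<and> fst ` edom h = UNIV"
proof -
  have real_valued: "\<exists>c. h (x, xs) = ereal c" if "xs \<in> snd ` edom h" for x xs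
    using assms(1-4,6) that by (rule fibre_real_valued)
  have finite: "\<bar>h (x, xs)\<bar> \<noteq> \<infinity>" and fibre: "(x, xs) \<in> edom h"
    if "xs \<in> snd ` edom h" for x xs
    using real_valued[OF that, of x] by (auto simp: edom_def)
  have lipschitz: "L-lipschitz_on UNIV (\<lambda>x. real_of_ereal (h (x, xs)))" if "xs \<in> snd ` edom h" for xs
    using assms(1-4,6) that by (rule fibre_lipschitz)
  have norm: "norm xs \<le> L" if "xs \<in> snd ` edom h" for xs
    using assms that by (rule fibre_norm_le)
  have edom: "edom h = UNIV \<times> snd ` edom h"
  proof (intro equalityI subsetI)
    fix p :: "'a \<times> ('a \<Rightarrow>\<^sub>L real)" assume "p \<in> UNIV \<times> snd ` edom h"
    then show "p \<in> edom h" using fibre[of "snd p" "fst p"] by (simp add: mem_Times_iff)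
  qed (simp add: mem_Times_iff)
  have subset: "edom h \<subseteq> UNIV \<times> {xs. norm xs \<le> L}"
    using norm[OF imageI] by (auto simp: mem_Times_iff)
  obtain z where "h z \<noteq> \<infinity>" using \<open>proper_fun h\<close> unfolding proper_fun_def by blast
  then have "snd z \<in> snd ` edom h" by (simp add: edom_def less_le)
  then have fst_edom: "fst ` edom h = UNIV" by (subst edom) (auto simp: fst_image_times)
  show ?thesis
  proof (intro conjI ballI allI)
    show "L-lipschitz_on UNIV (\<lambda>x. real_of_ereal (h (x, xs)))" if "xs \<in> snd ` edom h" for xs
      using that by (rule lipschitz)
  qed (fact edom subset fst_edom finite norm)+
qed

end
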